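(* Let $A$ be an associative algebra, $M$ an $A$-bimodule, $H: A\otimes A\to M$ a Hochschild $2$-cocycle, and $\{ T_\alpha : M \to A \}_{\alpha \in \Omega}$ an $H$-twisted $\mathcal{O}$-operator family. Then the linear map $T : M \otimes \mathbf{k}\Omega \to A \otimes \mathbf{k}\Omega$, $T (u \otimes \alpha) = T_\alpha (u) \otimes \alpha$, is an $\widehat{H}$-twisted $\mathcal{O}$-operator on the $(A\otimes\mathbf{k}\Omega)$-bimodule $M \otimes \mathbf{k}\Omega$ over the algebra $A \otimes \mathbf{k}\Omega$, i.e. for all $X,Y\in M\otimes\mathbf{k}\Omega$, $$T(X)\bullet T(Y) = T\big(T(X)\bullet Y + X\bullet T(Y) + \widehat{H}(T(X),T(Y))\big).$$
   Context: $\Omega$ is a semigroup, $\mathbf{k}\Omega$ its semigroup algebra over a field $\mathbf{k}$ of characteristic $0$. A Hochschild $2$-cocycle is a bilinear $H: A^{\otimes 2}\to M$ with $a \cdot H (b, c) - H ( a \cdot b, c)+ H (a, b \cdot c) - H (a, b) \cdot c =0$. An $H$-twisted $\mathcal{O}$-operator family is a collection of linear maps $\{T_\alpha: M\to A\}_{\alpha\in\Omega}$ with $T_\alpha (u) \cdot T_\beta (v) = T_{\alpha \beta} \big( T_\alpha (u) \cdot v + u \cdot T_\beta (v) + H (T_\alpha (u), T_\beta (v)) \big)$ for all $u,v\in M$, $\alpha,\beta\in\Omega$. $A\otimes\mathbf{k}\Omega$ is the associative algebra with $(a\otimes\alpha)\bullet(b\otimes\beta)=a\cdot b\otimes\alpha\beta$;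 $M\otimes\mathbf{k}\Omega$ is an $(A\otimes\mathbf{k}\Omega)$-bimodule via $(a\otimes\alpha)\bullet(u\otimes\beta)=a\cdot u\otimes\alpha\beta$ and $(u\otimes\beta)\bullet(a\otimes\alpha)=u\cdot a\otimes\beta\alpha$. $\widehat{H}:(A\otimes\mathbf{k}\Omega)^{\otimes 2}\to M\otimes\mathbf{k}\Omega$ is the $2$-cocycle $\widehat{H}(a\otimes\alpha, b\otimes\beta)=H(a,b)\otimes\alpha\beta$. *)

theory Defs
  imports Complex_Main
begin

definition bilin :: "('k::field \<Rightarrow> 'a::ab_group_add \<Rightarrow> 'a) \<Rightarrow> ('k \<Rightarrow> 'b::ab_group_add \<Rightarrow> 'b)
    \<Rightarrow> ('k \<Rightarrow> 'c::ab_group_add \<Rightarrow> 'c) \<Rightarrow> ('a \<Rightarrow> 'b \<Rightarrow> 'c) \<Rightarrow> bool" where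
  "bilin s1 s2 s3 f \<longleftrightarrow>
     (\<forall>x. Vector_Spaces.linear s2 s3 (f x)) \<and> (\<forall>y. Vector_Spaces.linear s1 s3 (\<lambda>x. f x y))"

definition assoc_algebra :: "('k::field \<Rightarrow> 'a::ab_group_add \<Rightarrow> 'a) \<Rightarrow> ('a \<Rightarrow> 'a \<Rightarrow> 'a) \<Rightarrow> bool" where
  "assoc_algebra sA mA \<longleftrightarrow> bilin sA sA sA mA \<and> (\<forall>a b c. mA (mA a b) c = mA a (mA b c))"

definition bimodule :: "('k::field \<Rightarrow> 'a::ab_group_add \<Rightarrow> 'a) \<Rightarrow> ('a \<Rightarrow> 'a \<Rightarrow> 'a)
    \<Rightarrow> ('k \<Rightarrow> 'm::ab_group_add \<Rightarrow> 'm) \<Rightarrow> ('a \<Rightarrow> 'm \<Rightarrow> 'm) \<Rightarrow> ('m \<Rightarrow> 'a \<Rightarrow> 'm) \<Rightarrow> bool" where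
  "bimodule sA mA sM lact ract \<longleftrightarrow>
     bilin sA sM sM lact \<and> bilin sM sA sM ract \<and>
     (\<forall>a b u. lact (mA a b) u = lact a (lact b u)) \<and>
     (\<forall>a b u. ract u (mA a b) = ract (ract u a) b) \<and>
     (\<forall>a b u. ract (lact a u) b = lact a (ract u b))"

definition hochschild_2cocycle :: "('k::field \<Rightarrow> 'a::ab_group_add \<Rightarrow> 'a) \<Rightarrow> ('a \<Rightarrow> 'a \<Rightarrow> 'a)
    \<Rightarrow> ('k \<Rightarrow> 'm::ab_group_add \<Rightarrow> 'm) \<Rightarrow> ('a \<Rightarrow> 'm \<Rightarrow> 'm) \<Rightarrow> ('m \<Rightarrow> 'a \<Rightarrow> 'm)
    \<Rightarrow> ('a \<Rightarrow> 'a \<Rightarrow> 'm) \<Rightarrow> bool" where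
  "hochschild_2cocycle sA mA sM lact ract H \<longleftrightarrow>
     bilin sA sA sM H \<and>
     (\<forall>a b c. lact a (H b c) - H (mA a b) c + H a (mA b c) - ract (H a b) c = 0)"

definition twisted_O_family :: "('k::field \<Rightarrow> 'a::ab_group_add \<Rightarrow> 'a) \<Rightarrow> ('a \<Rightarrow> 'a \<Rightarrow> 'a)
    \<Rightarrow> ('k \<Rightarrow> 'm::ab_group_add \<Rightarrow> 'm) \<Rightarrow> ('a \<Rightarrow> 'm \<Rightarrow> 'm) \<Rightarrow> ('m \<Rightarrow> 'a \<Rightarrow> 'm)
    \<Rightarrow> ('a \<Rightarrow> 'a \<Rightarrow> 'm) \<Rightarrow> ('s::semigroup_mult \<Rightarrow> 'm \<Rightarrow> 'a) \<Rightarrow> bool" where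
  "twisted_O_family sA mA sM lact ract H T \<longleftrightarrow>
     (\<forall>\<alpha>. Vector_Spaces.linear sM sA (T \<alpha>)) \<and>
     (\<forall>\<alpha> \<beta> u v. mA (T \<alpha> u) (T \<beta> v) =
        T (\<alpha> * \<beta>) (lact (T \<alpha> u) v + ract u (T \<beta> v) + H (T \<alpha> u) (T \<beta> v)))"

text \<open>Elements of V (x) k\<Omega> are identified with finitely supported functions \<Omega> => V
  (sum over \<alpha> of v_\<alpha> (x) \<alpha>).\<close>
definition fin_supp :: "('s \<Rightarrow> 'v::zero) \<Rightarrow> bool" where
  "fin_supp f \<longleftrightarrow> finite {x. f x \<noteq> 0}"

text \<open>Convolution: for a bilinear p : V x W -> U, the induced map
  (v (x) \<alpha>, w (x) \<beta>) |-> p v w (x) \<alpha>\<beta> on finitely supported functions.\<close>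
definition conv :: "('v \<Rightarrow> 'w \<Rightarrow> 'u::comm_monoid_add) \<Rightarrow> ('s::semigroup_mult \<Rightarrow> 'v::zero)
    \<Rightarrow> ('s \<Rightarrow> 'w::zero) \<Rightarrow> 's \<Rightarrow> 'u" where
  "conv p f g \<gamma> = (\<Sum>(\<alpha>, \<beta>) \<in> {(\<alpha>, \<beta>). f \<alpha> \<noteq> 0 \<and> g \<beta> \<noteq> 0 \<and> \<alpha> * \<beta> = \<gamma>}. p (f \<alpha>) (g \<beta>))"

definition Tlift :: "('s \<Rightarrow> 'm \<Rightarrow> 'a) \<Rightarrow> ('s \<Rightarrow> 'm) \<Rightarrow> 's \<Rightarrow> 'a" where
  "Tlift T X = (\<lambda>\<alpha>. T \<alpha> (X \<alpha>))"

end

theory Submission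
  imports Defs
begin

text \<open>Both sides of the identity are convolutions, so at each \<gamma> they are sums over the pairs
  (\<alpha>, \<beta>) with \<alpha> \<beta> = \<gamma> of the supports of X and Y. Term by term the two summands agree by
  the twisted O-operator family identity for T_\<alpha> and T_\<beta>, whose right-hand side lies in the
  image of T_\<gamma>; linearity of T_\<gamma> then moves the sum inside.\<close>

lemma linear_map_zero:
  assumes "Vector_Spaces.linear s1 s2 f"
  shows "f 0 = 0"
  using assms module_hom.zero[of s1 s2 f] by (simp add: module_hom_iff_linear)

lemma linear_map_sum:
  assumes "Vector_Spaces.linear s1 s2 f"
  shows "f (sum g S) = (\<Sum>x\<in>S. f (g x))"
  using assms module_hom.sum[of s1 s2 f] by (simp add: module_hom_iff_linear)

lemma bilin_zero:
  assumes "bilin s1 s2 s3 p"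
  shows "p 0 y = 0" and "p x 0 = 0"
  using assms unfolding bilin_def by (metis linear_map_zero)+

lemma Tlift_support_subset:
  assumes "\<And>\<alpha>. T \<alpha> 0 = 0"
  shows "{\<alpha>. Tlift T X \<alpha> \<noteq> 0} \<subseteq> {\<alpha>. X \<alpha> \<noteq> 0}"
  using assms by (auto simp: Tlift_def)

lemma conv_eq_sum_over_supersets:
  fixes p :: "'v::zero \<Rightarrow> 'w::zero \<Rightarrow> 'u::comm_monoid_add" and f :: "'s::semigroup_mult \<Rightarrow> 'v"
  assumes "\<And>y. p 0 y = 0" and "\<And>x. p x 0 = 0"
    and "finite A" and "finite B"
    and "{\<alpha>. f \<alpha> \<noteq> 0} \<subseteq> A" and "{\<beta>. g \<beta> \<noteq> 0} \<subseteq> B"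
  shows "conv p f g \<gamma> = (\<Sum>(\<alpha>, \<beta>) \<in> {(\<alpha>, \<beta>). \<alpha> \<in> A \<and> \<beta> \<in> B \<and> \<alpha> * \<beta> = \<gamma>}. p (f \<alpha>) (g \<beta>))"
  unfolding conv_def
proof (rule sum.mono_neutral_left)
  have "{(\<alpha>, \<beta>). \<alpha> \<in> A \<and> \<beta> \<in> B \<and> \<alpha> * \<beta> = \<gamma>} \<subseteq> A \<times> B" by auto
  then show "finite {(\<alpha>, \<beta>). \<alpha> \<in> A \<and> \<beta> \<in> B \<and> \<alpha> * \<beta> = \<gamma>}"
    using assms(3,4) finite_subset by blast
qed (use assms in auto)

lemma twisted_O_family_sum:
  assumes "twisted_O_family sA mA sM lact ract H T"
    and "\<And>\<alpha> \<beta>. (\<alpha>, \<beta>) \<in> S \<Longrightarrow> \<alpha> * \<beta> = \<gamma>"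
  shows "(\<Sum>(\<alpha>, \<beta>) \<in> S. mA (T \<alpha> (x \<alpha>)) (T \<beta> (y \<beta>))) =
    T \<gamma> (\<Sum>(\<alpha>, \<beta>) \<in> S. lact (T \<alpha> (x \<alpha>)) (y \<beta>) + ract (x \<alpha>) (T \<beta> (y \<beta>))
                        + H (T \<alpha> (x \<alpha>)) (T \<beta> (y \<beta>)))"
proof -
  have "Vector_Spaces.linear sM sA (T \<gamma>)"
    and "\<And>\<alpha> \<beta> u v. mA (T \<alpha> u) (T \<beta> v) =
      T (\<alpha> * \<beta>) (lact (T \<alpha> u) v + ract u (T \<beta> v) + H (T \<alpha> u) (T \<beta> v))"
    using assms(1) unfolding twisted_O_family_def by auto
  then show ?thesis
    using assms(2) by (auto simp: linear_map_sum split_def intro: sum.cong)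
qed

theorem proposition3p10:
  fixes sA :: "'k::field_char_0 \<Rightarrow> 'a::ab_group_add \<Rightarrow> 'a"
    and mA :: "'a \<Rightarrow> 'a \<Rightarrow> 'a"
    and sM :: "'k \<Rightarrow> 'm::ab_group_add \<Rightarrow> 'm"
    and lact :: "'a \<Rightarrow> 'm \<Rightarrow> 'm"
    and ract :: "'m \<Rightarrow> 'a \<Rightarrow> 'm"
    and H :: "'a \<Rightarrow> 'a \<Rightarrow> 'm"
    and T :: "'s::semigroup_mult \<Rightarrow> 'm \<Rightarrow> 'a"
    and X Y :: "'s \<Rightarrow> 'm"
  assumes "assoc_algebra sA mA"
    and "bimodule sA mA sM lact ract"
    and "hochschild_2cocycle sA mA sM lact ract H"
    and "twisted_O_family sA mA sM lact ract H T"
    and "fin_supp X" and "fin_supp Y"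
  shows "conv mA (Tlift T X) (Tlift T Y) =
         Tlift T (\<lambda>\<gamma>. conv lact (Tlift T X) Y \<gamma> + conv ract X (Tlift T Y) \<gamma>
                        + conv H (Tlift T X) (Tlift T Y) \<gamma>)"
proof
  fix \<gamma>
  define A where "A = {\<alpha>. X \<alpha> \<noteq> 0}"
  define B where "B = {\<beta>. Y \<beta> \<noteq> 0}"
  have finite: "finite A" "finite B"
    using assms(5,6) by (simp_all add: A_def B_def fin_supp_def)
  have "\<And>\<alpha>. T \<alpha> 0 = 0"
    using assms(4) by (metis twisted_O_family_def linear_map_zero)
  then have supports: "{\<alpha>. Tlift T X \<alpha> \<noteq> 0} \<subseteq> A" "{\<beta>. Tlift T Y \<beta> \<noteq> 0} \<subseteq> B"
    "{\<alpha>. X \<alpha> \<noteq> 0} \<subseteq> A" "{\<beta>. Y \<beta> \<noteq> 0} \<subseteq> B"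
    by (auto simp: A_def B_def dest: Tlift_support_subset)
  have bilinear: "bilin sA sA sA mA" "bilin sA sM sM lact" "bilin sM sA sM ract" "bilin sA sA sM H"
    using assms(1-3) by (simp_all add: assoc_algebra_def bimodule_def hochschild_2cocycle_def)
  note fibre_sums =
    conv_eq_sum_over_supersets[where p = mA, OF bilin_zero[OF bilinear(1)] finite supports(1,2)]
    conv_eq_sum_over_supersets[where p = lact, OF bilin_zero[OF bilinear(2)] finite supports(1,4)]
    conv_eq_sum_over_supersets[where p = ract, OF bilin_zero[OF bilinear(3)] finite supports(3,2)]
    conv_eq_sum_over_supersets[where p = H, OF bilin_zero[OF bilinear(4)] finite supports(1,2)]
  show "conv mA (Tlift T X) (Tlift T Y) \<gamma> = Tlift T (\<lambda>\<gamma>. conv lact (Tlift T X) Y \<gamma>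
      + conv ract X (Tlift T Y) \<gamma> + conv H (Tlift T X) (Tlift T Y) \<gamma>) \<gamma>"
    unfolding fibre_sums unfolding Tlift_def
    by (subst twisted_O_family_sum[OF assms(4)]) (auto simp: sum.distrib split_def)
qed

end
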